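(* Let $w_0$ and $w_1$ be words of length $N$. If $w_0\to w_1$ is a star anagram with star path $p$, then $w_1\to w_0$ is a star anagram with star path the reversed path $\bar p$.
   Context: A path of length $N$ is a vector $p=(p_0,\dots,p_{N-1})$ whose entries are the integers $0,\dots,N-1$ in some order; indices are cyclic, $p_N=p_0$. If $w_0=a_0a_1\cdots a_{N-1}$, then $p$ is a path for the anagram $w_0\to w_1$ if $w_1=a_{p_0}a_{p_1}\cdots a_{p_{N-1}}$. Positions $i,j$ are cyclically adjacent if $(i-j)\bmod N\in\{1,N-1\}$, where $x\bmod N$ is the remainder in $\{0,\dots,N-1\}$. A path $p$ is a star path if for every $n\in\{0,\dots,N-1\}$ the positions $p_n$ and $p_{n+1}$ are not cyclically adjacent (no letter in the new word is adjacent, counting first and last as adjacent, to one of its original neighbors). The anagram $w_0\to w_1$ is a star anagram with star path $p$ if $p$ is a path for it that is a star path. The reversed path $\bar p=(\bar p_0,\dots,\bar p_{N-1})$ of $p$ is the inverse permutation, i.e. $\bar p_{p_n}=n$ and $p_{\bar p_n}=n$ for all $n$; it is a path for $w_1\to w_0$. *)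

theory Defs
  imports Main
begin

definition is_path :: "nat \<Rightarrow> nat list \<Rightarrow> bool" where
  "is_path N p \<longleftrightarrow> length p = N \<and> distinct p \<and> set p = {0..<N}"

definition path_for :: "nat list \<Rightarrow> 'a list \<Rightarrow> 'a list \<Rightarrow> bool" where
  "path_for p w0 w1 \<longleftrightarrow> is_path (length w0) p \<and> length w1 = length w0 \<and>
     (\<forall>n < length w0. w1 ! n = w0 ! (p ! n))"

definition cyc_adjacent :: "nat \<Rightarrow> nat \<Rightarrow> nat \<Rightarrow> bool" where
  "cyc_adjacent N i j \<longleftrightarrow> (int i - int j) mod int N \<in> {1, int N - 1}"

definition star_path :: "nat list \<Rightarrow> bool" where
  "star_path p \<longleftrightarrow> is_path (length p) p \<and>
     (\<forall>n < length p. \<not> cyc_adjacent (length p) (p ! n) (p ! ((n + 1) mod length p)))"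

definition star_anagram_with :: "'a list \<Rightarrow> 'a list \<Rightarrow> nat list \<Rightarrow> bool" where
  "star_anagram_with w0 w1 p \<longleftrightarrow> path_for p w0 w1 \<and> star_path p"

definition reversed_path :: "nat list \<Rightarrow> nat list" where
  "reversed_path p = map (\<lambda>m. THE n. n < length p \<and> p ! n = m) [0..<length p]"

end

theory Submission
  imports Defs
begin

text \<open>Since cyclic adjacency is symmetric, a path p is a star path exactly when it maps
  no pair of cyclically adjacent positions to a pair of cyclically adjacent positions. This
  condition is invariant under passing from p to its inverse permutation, and the inverse
  permutation of a path for w0 to w1 is a path for w1 to w0.\<close>

lemma cyc_adjacent_commute: "cyc_adjacent N i j \<longleftrightarrow> cyc_adjacent N j i"
proof -
  have "(- x) mod M \<in> {1, M - 1} \<longleftrightarrow> x mod M \<in> {1, M - 1}" for x M :: int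
    by (auto simp: zmod_zminus1_eq_if)
  from this [of "int i - int j" "int N"] show ?thesis
    unfolding cyc_adjacent_def by simp
qed

lemma cyc_adjacent_iff_Suc_mod:
  assumes "i < N" "j < N"
  shows "cyc_adjacent N i j \<longleftrightarrow> i = Suc j mod N \<or> j = Suc i mod N"
proof -
  have N: "int N > 0" using assms by simp
  have "cyc_adjacent N i j \<longleftrightarrow>
      (int i - int j) mod int N = 1 mod int N \<or> (int i - int j) mod int N = -1 mod int N"
    unfolding cyc_adjacent_def using N zmod_minus1 [OF N]
    by (cases "N = 1") auto \<comment> \<open>for N = 1 the residue of 1 is 0, covered by N - 1\<close>
  also have "\<dots> \<longleftrightarrow>
      int i mod int N = (int j + 1) mod int N \<or> (int i + 1) mod int N = int j mod int N"
    by (simp add: mod_eq_dvd_iff algebra_simps)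
  also have "\<dots> \<longleftrightarrow> i = Suc j mod N \<or> j = Suc i mod N"
  proof -
    have "(int k + 1) mod int N = int (Suc k mod N)" for k
      by (simp add: zmod_int add.commute)
    then show ?thesis
      using assms by (auto simp del: of_nat_Suc)
  qed
  finally show ?thesis .
qed

lemma length_reversed_path [simp]: "length (reversed_path p) = length p"
  by (simp add: reversed_path_def)

lemma
  assumes "is_path N p" "m < N"
  shows reversed_path_nth_less: "reversed_path p ! m < N"
    and nth_reversed_path: "p ! (reversed_path p ! m) = m"
proof -
  have "\<exists>!n. n < length p \<and> p ! n = m"
    using assms unfolding is_path_def by (metis atLeastLessThan_iff distinct_Ex1 zero_le)
  from theI' [OF this] assms show "reversed_path p ! m < N" "p ! (reversed_path p ! m) = m"
    unfolding reversed_path_def is_path_def by auto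
qed

lemma is_path_reversed_path:
  assumes "is_path N p"
  shows "is_path N (reversed_path p)"
proof -
  have "length (reversed_path p) = N"
    using assms by (simp add: is_path_def)
  moreover have "distinct (reversed_path p)"
    unfolding distinct_conv_nth using nth_reversed_path [OF assms] \<open>length _ = N\<close> by metis
  moreover have "set (reversed_path p) \<subseteq> {0..<N}"
    using reversed_path_nth_less [OF assms] \<open>length _ = N\<close> by (auto simp: in_set_conv_nth)
  ultimately show ?thesis
    unfolding is_path_def
    by (metis card_atLeastLessThan card_subset_eq diff_zero distinct_card finite_atLeastLessThan)
qed

lemma path_for_reversed_path:
  assumes "path_for p w0 w1"
  shows "path_for (reversed_path p) w1 w0"
  using assms is_path_reversed_path nth_reversed_path reversed_path_nth_less
  unfolding path_for_def by (metis is_path_def)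

lemma star_path_iff_adjacent:
  "star_path p \<longleftrightarrow> is_path (length p) p \<and>
     (\<forall>i < length p. \<forall>j < length p. cyc_adjacent (length p) i j \<longrightarrow>
        \<not> cyc_adjacent (length p) (p ! i) (p ! j))"
  (is "_ \<longleftrightarrow> ?path \<and> ?adj")
proof (cases ?path)
  case path: True
  let ?N = "length p"
  have "\<not> cyc_adjacent ?N (p ! i) (p ! j)"
    if star: "star_path p" "i < ?N" "j < ?N" "cyc_adjacent ?N i j" for i j
    using cyc_adjacent_iff_Suc_mod [of i ?N j] star cyc_adjacent_commute
    unfolding star_path_def by (metis mod_Suc_eq Suc_eq_plus1)
  moreover have "star_path p" if ?adj
  proof -
    have "(n + 1) mod ?N < ?N" "cyc_adjacent ?N n ((n + 1) mod ?N)" if "n < ?N" for n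
    proof -
      show "(n + 1) mod ?N < ?N"
        using that by (metis gr0I less_zeroE mod_less_divisor)
      then show "cyc_adjacent ?N n ((n + 1) mod ?N)"
        using that cyc_adjacent_iff_Suc_mod by simp
    qed
    then show ?thesis
      unfolding star_path_def using path \<open>?adj\<close> by blast
  qed
  ultimately show ?thesis using path by blast
qed (simp add: star_path_def)

lemma star_path_reversed_path:
  assumes "star_path p"
  shows "star_path (reversed_path p)"
proof -
  let ?N = "length p"
  have path: "is_path ?N p"
    using assms by (simp add: star_path_iff_adjacent)
  have "\<not> cyc_adjacent ?N (reversed_path p ! i) (reversed_path p ! j)"
    if "i < ?N" "j < ?N" "cyc_adjacent ?N i j" for i j
    using assms that reversed_path_nth_less [OF path] nth_reversed_path [OF path]
    unfolding star_path_iff_adjacent by metis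
  then show ?thesis
    using is_path_reversed_path [OF path] by (simp add: star_path_iff_adjacent)
qed

theorem mainTheorem9:
  fixes w0 w1 :: "'a list" and p :: "nat list" and N :: nat
  assumes "length w0 = N" and "length w1 = N"
    and "star_anagram_with w0 w1 p"
  shows "star_anagram_with w1 w0 (reversed_path p)"
  using assms(3) path_for_reversed_path star_path_reversed_path
  unfolding star_anagram_with_def by blast

end
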